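(* Every first countable topological space which is statistically compact is sequentially compact.
   Context: For $A\subseteq\mathbb{N}$ let $d_n(A)=|A\cap\{1,\dots,n\}|/n$, $\overline{d}(A)=\limsup_n d_n(A)$, $\underline{d}(A)=\liminf_n d_n(A)$, and $d(A)$ their common value when equal. A sequence in $X$ is a map from an infinite subset $M\subseteq\mathbb{N}$ into $X$, written $(x_n)_{n\in M}$; a subsequence is $(x_n)_{n\in N}$ with $N\subseteq M$ infinite. It is nonthin if $\overline{d}(M)>0$. A nonthin sequence $(x_n)_{n\in M}$ is statistically convergent to $a\in X$ if for every open $U\ni a$, $d(\{n\in M:x_n\notin U\})=0$. A topological space $X$ is statistically compact if every nonthin sequence in $X$ has a nonthin subsequence that is statistically convergent to some point of $X$. *)

theory Defs
  imports "HOL-Analysis.Analysis" "HOL-Library.Liminf_Limsup"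
begin

definition dens_n :: "nat set \<Rightarrow> nat \<Rightarrow> real" where
  "dens_n A n = real (card (A \<inter> {1..n})) / real n"

definition upper_density :: "nat set \<Rightarrow> ereal" where
  "upper_density A = limsup (\<lambda>n. ereal (dens_n A n))"

definition has_density :: "nat set \<Rightarrow> real \<Rightarrow> bool" where
  "has_density A r \<longleftrightarrow> ((\<lambda>n. dens_n A n) \<longlongrightarrow> r) sequentially"

definition nonthin :: "nat set \<Rightarrow> bool" where
  "nonthin M \<longleftrightarrow> infinite M \<and> upper_density M > 0"

definition stat_converges :: "nat set \<Rightarrow> (nat \<Rightarrow> 'a::topological_space) \<Rightarrow> 'a \<Rightarrow> bool" where
  "stat_converges M x a \<longleftrightarrow> nonthin M \<and>
     (\<forall>U. open U \<and> a \<in> U \<longrightarrow> has_density {n \<in> M. x n \<notin> U} 0)"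

definition statistically_compact :: "'a::topological_space itself \<Rightarrow> bool" where
  "statistically_compact _ \<longleftrightarrow>
     (\<forall>M (x :: nat \<Rightarrow> 'a). nonthin M \<longrightarrow>
        (\<exists>N. N \<subseteq> M \<and> nonthin N \<and> (\<exists>a. stat_converges N x a)))"

end

theory Submission
  imports Defs
begin

text \<open>Apply statistical compactness to the whole sequence (the index set \<open>UNIV\<close> has density 1).
  Its statistical limit \<open>a\<close> along a nonthin \<open>N\<close> is a cluster point of the sequence: for an open
  \<open>U \<ni> a\<close> the indices in \<open>N\<close> with \<open>x n \<notin> U\<close> have density zero, so they cannot exhaust \<open>N\<close> up to
  a finite set. In a first countable space a cluster point is the limit of a subsequence, obtained
  by picking ever later terms in a decreasing neighbourhood basis of \<open>a\<close>.\<close>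

lemma has_density_UNIV: "has_density UNIV 1"
  unfolding has_density_def
  by (rule tendsto_eventually) (auto simp: eventually_sequentially dens_n_def intro: exI[of _ 1])

lemma nonthin_UNIV: "nonthin UNIV"
proof -
  have "((\<lambda>n. ereal (dens_n UNIV n)) \<longlongrightarrow> 1) sequentially"
    using has_density_UNIV unfolding has_density_def one_ereal_def by (rule tendsto_ereal)
  then have "upper_density UNIV = 1"
    unfolding upper_density_def by (intro lim_imp_Limsup) auto
  then show ?thesis
    unfolding nonthin_def by simp
qed

lemma not_nonthin_if_has_density_zero:
  assumes "has_density A 0"
  shows "\<not> nonthin A"
proof -
  have "((\<lambda>n. ereal (dens_n A n)) \<longlongrightarrow> 0) sequentially"
    using assms unfolding has_density_def zero_ereal_def by (rule tendsto_ereal)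
  then have "upper_density A = 0"
    unfolding upper_density_def by (intro lim_imp_Limsup) auto
  then show ?thesis
    unfolding nonthin_def by simp
qed

lemma has_density_zero_subset_Un_finite:
  assumes E: "has_density E 0" and F: "finite F" and sub: "A \<subseteq> E \<union> F"
  shows "has_density A 0"
proof -
  have bound: "dens_n A n \<le> dens_n E n + real (card F) / real n" for n
  proof -
    have "card (A \<inter> {1..n}) \<le> card ((E \<inter> {1..n}) \<union> F)"
      using sub F by (intro card_mono) auto
    also have "\<dots> \<le> card (E \<inter> {1..n}) + card F"
      by (rule card_Un_le)
    finally show ?thesis
      unfolding dens_n_def add_divide_distrib[symmetric]
      by (intro divide_right_mono) auto
  qed
  have upper: "(\<lambda>n. dens_n E n + real (card F) / real n) \<longlonglongrightarrow> 0"
    using E unfolding has_density_def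
    by (intro tendsto_add_zero tendsto_divide_0[OF tendsto_const]
        filterlim_at_top_imp_at_infinity filterlim_real_sequentially)
  show ?thesis
    unfolding has_density_def
  proof (rule tendsto_sandwich[OF _ _ tendsto_const upper])
    show "\<forall>\<^sub>F n in sequentially. 0 \<le> dens_n A n"
      by (simp add: dens_n_def)
    show "\<forall>\<^sub>F n in sequentially. dens_n A n \<le> dens_n E n + real (card F) / real n"
      by (simp add: bound)
  qed
qed

lemma stat_converges_imp_infinite_visits:
  assumes conv: "stat_converges N x a" and "open U" "a \<in> U"
  shows "infinite {n \<in> N. x n \<in> U}"
proof
  assume fin: "finite {n \<in> N. x n \<in> U}"
  have "has_density {n \<in> N. x n \<notin> U} 0"
    using conv \<open>open U\<close> \<open>a \<in> U\<close> unfolding stat_converges_def by blast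
  then have "has_density N 0"
    using fin by (rule has_density_zero_subset_Un_finite) auto
  with conv show False
    unfolding stat_converges_def using not_nonthin_if_has_density_zero by blast
qed

lemma cluster_point_imp_convergent_subsequence:
  fixes f :: "nat \<Rightarrow> 'a :: first_countable_topology"
  assumes l: "\<And>U. open U \<Longrightarrow> l \<in> U \<Longrightarrow> infinite {n. f n \<in> U}"
  shows "\<exists>r. strict_mono r \<and> (f \<circ> r) \<longlonglongrightarrow> l"
proof -
  obtain A where A:
      "\<And>i. open (A i)"
      "\<And>i. l \<in> A i"
      "\<And>S. open S \<Longrightarrow> l \<in> S \<Longrightarrow> eventually (\<lambda>i. A i \<subseteq> S) sequentially"
    using countable_basis_at_decseq[of l] by blast
  define s where "s n i = (SOME j. i < j \<and> f j \<in> A (Suc n))" for n i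
  have s: "i < s n i \<and> f (s n i) \<in> A (Suc n)" for n i
  proof -
    have "infinite {j. f j \<in> A (Suc n)}"
      using A(1,2) by (rule l)
    then have "\<exists>j>i. f j \<in> A (Suc n)"
      unfolding infinite_nat_iff_unbounded by auto
    then show ?thesis
      unfolding s_def by (rule someI_ex)
  qed
  define r where "r = rec_nat (s 0 0) s"
  have "strict_mono r"
    by (auto simp: r_def s strict_mono_Suc_iff)
  moreover have "(\<lambda>n. f (r n)) \<longlonglongrightarrow> l"
  proof (rule topological_tendstoI)
    fix S assume "open S" "l \<in> S"
    then have "eventually (\<lambda>i. A i \<subseteq> S) sequentially"
      by (rule A(3))
    moreover have "eventually (\<lambda>i. f (r i) \<in> A i) sequentially"
    proof (rule eventually_sequentiallyI)
      fix i :: nat assume "1 \<le> i"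
      then show "f (r i) \<in> A i"
        by (cases i) (simp_all add: r_def s)
    qed
    ultimately show "eventually (\<lambda>i. f (r i) \<in> S) sequentially"
      by eventually_elim auto
  qed
  ultimately show ?thesis
    by (auto simp: comp_def)
qed

theorem mainTheorem6:
  assumes "statistically_compact TYPE('a::first_countable_topology)"
  shows "seq_compact (UNIV :: 'a set)"
  unfolding seq_compact_def
proof (intro allI impI)
  fix f :: "nat \<Rightarrow> 'a"
  obtain N a where "stat_converges N f a"
    using assms nonthin_UNIV unfolding statistically_compact_def by blast
  have "infinite {n. f n \<in> U}" if "open U" "a \<in> U" for U
  proof (rule infinite_super)
    show "infinite {n \<in> N. f n \<in> U}"
      using \<open>stat_converges N f a\<close> that by (rule stat_converges_imp_infinite_visits)
  qed auto
  then have "\<exists>r. strict_mono r \<and> (f \<circ> r) \<longlonglongrightarrow> a"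
    by (rule cluster_point_imp_convergent_subsequence)
  then show "\<exists>l\<in>UNIV. \<exists>r. strict_mono r \<and> (f \<circ> r) \<longlonglongrightarrow> l"
    by blast
qed

end
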